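(* Let $(X,d)$ be a compact metric space and let $f_1,f_2:X\to X$ be continuous. Suppose there is $c\in X$ with $f_1(x)=c$ for all $x\in X$, $f_2(c)=c$, and $f_2$ is accessible. Then the multiple mapping $F=\{f_1,f_2\}$ is (Hausdorff metric) accessible.
   Context: For the multiple mapping $F=\{f_1,f_2\}$ and $n\ge 1$, $F^n(x)=\{f_{i_1}f_{i_2}\cdots f_{i_n}(x)\mid i_1,\dots,i_n\in\{1,2\}\}$. The Hausdorff metric on nonempty compact subsets is $d_H(A,B)=\max\{\sup_{a\in A}\inf_{b\in B}d(a,b),\sup_{b\in B}\inf_{a\in A}d(a,b)\}$. $F$ is (Hausdorff metric) accessible if for every $\epsilon>0$ and all nonempty open $U,V\subset X$ there exist $x\in U$, $y\in V$ and $n\in\mathbb{Z}^+$ with $d_H(F^n(x),F^n(y))<\epsilon$. A continuous $f:X\to X$ is accessible if for every $\epsilon>0$ and all nonempty open $U,V\subset X$ there exist $x\in U$, $y\in V$ and $n\in\mathbb{Z}^+$ with $d(f^n(x),f^n(y))<\epsilon$. Here $\mathbb{Z}^+=\{1,2,\dots\}$. *)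

theory Defs
  imports "HOL-Analysis.Analysis"
begin

definition hdist :: "'a::metric_space set \<Rightarrow> 'a set \<Rightarrow> real" where
  "hdist A B = max (SUP a\<in>A. INF b\<in>B. dist a b) (SUP b\<in>B. INF a\<in>A. dist a b)"

text \<open>F^n(x) for the multiple mapping F = {f1, f2}: all compositions
  f_{i_1} o ... o f_{i_n} applied to x, indices i_k in {1,2}.\<close>
definition multi_iter :: "('a \<Rightarrow> 'a) \<Rightarrow> ('a \<Rightarrow> 'a) \<Rightarrow> nat \<Rightarrow> 'a \<Rightarrow> 'a set" where
  "multi_iter f1 f2 n x =
     {foldr (\<lambda>i y. (if i = (1::nat) then f1 else f2) y) is x | is.
        length is = n \<and> set is \<subseteq> {1, 2}}"

definition accessible_map :: "'a::metric_space set \<Rightarrow> ('a \<Rightarrow> 'a) \<Rightarrow> bool" where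
  "accessible_map X f \<longleftrightarrow>
     (\<forall>\<epsilon>>0. \<forall>U V. openin (top_of_set X) U \<and> U \<noteq> {} \<and> openin (top_of_set X) V \<and> V \<noteq> {} \<longrightarrow>
        (\<exists>x\<in>U. \<exists>y\<in>V. \<exists>n\<ge>1. dist ((f ^^ n) x) ((f ^^ n) y) < \<epsilon>))"

definition accessible_multi :: "'a::metric_space set \<Rightarrow> ('a \<Rightarrow> 'a) \<Rightarrow> ('a \<Rightarrow> 'a) \<Rightarrow> bool" where
  "accessible_multi X f1 f2 \<longleftrightarrow>
     (\<forall>\<epsilon>>0. \<forall>U V. openin (top_of_set X) U \<and> U \<noteq> {} \<and> openin (top_of_set X) V \<and> V \<noteq> {} \<longrightarrow>
        (\<exists>x\<in>U. \<exists>y\<in>V. \<exists>n\<ge>1. hdist (multi_iter f1 f2 n x) (multi_iter f1 f2 n y) < \<epsilon>))"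

end

theory Submission
  imports Defs
begin

text \<open>Every composition containing \<open>f\<^sub>1\<close> sends a point of \<open>X\<close> to \<open>c\<close>, because \<open>f\<^sub>1\<close> collapses
  \<open>X\<close> to \<open>c\<close> and \<open>c\<close> is fixed by \<open>f\<^sub>2\<close>. Hence \<open>F\<^sup>n(x) = {c, f\<^sub>2\<^sup>n(x)}\<close> for \<open>n \<ge> 1\<close>, and two sets
  sharing the point \<open>c\<close> and differing in one point each are within Hausdorff distance
  \<open>d(f\<^sub>2\<^sup>n(x), f\<^sub>2\<^sup>n(y))\<close>, which accessibility of \<open>f\<^sub>2\<close> makes small.\<close>

lemma hdist_insert_insert_le:
  fixes c a b :: "'a::metric_space"
  shows "hdist {c, a} {c, b} \<le> dist a b"
  unfolding hdist_def by (simp add: dist_commute Inf_insert_finite Sup_insert_finite)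

lemma funpow_in_invariant:
  assumes "f ` X \<subseteq> X" and "x \<in> X"
  shows "(f ^^ n) x \<in> X"
  using assms by (induction n) auto

lemma foldr_collapse_to_fixed_point:
  assumes f1: "\<forall>x\<in>X. f1 x = c" and f2: "f2 c = c" "f2 ` X \<subseteq> X"
    and "c \<in> X" "x \<in> X" "set is \<subseteq> {1, 2}"
  shows "foldr (\<lambda>i y. (if i = (1::nat) then f1 else f2) y) is x
    = (if 1 \<in> set is then c else (f2 ^^ length is) x)"
  using assms(6)
proof (induction "is")
  case Nil
  show ?case by simp
next
  case (Cons i js)
  then have IH: "foldr (\<lambda>i y. (if i = (1::nat) then f1 else f2) y) js x
    = (if 1 \<in> set js then c else (f2 ^^ length js) x)"
    by simp
  have "(f2 ^^ length js) x \<in> X"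
    using funpow_in_invariant[OF f2(2) \<open>x \<in> X\<close>] .
  with IH f1 f2(1) \<open>c \<in> X\<close> show ?case
    by (cases "i = 1") auto
qed

lemma multi_iter_collapse:
  assumes "\<forall>x\<in>X. f1 x = c" "f2 c = c" "f2 ` X \<subseteq> X" "c \<in> X" "x \<in> X" "n \<ge> 1"
  shows "multi_iter f1 f2 n x = {c, (f2 ^^ n) x}"
proof
  note word = foldr_collapse_to_fixed_point[OF assms(1-5)]
  show "multi_iter f1 f2 n x \<subseteq> {c, (f2 ^^ n) x}"
    unfolding multi_iter_def using word by auto
  let ?w1 = "1 # replicate (n - 1) (2::nat)" and ?w2 = "replicate n (2::nat)"
  have w1: "set ?w1 \<subseteq> {1, 2}" "length ?w1 = n" and w2: "set ?w2 \<subseteq> {1, 2}" "length ?w2 = n"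
    using \<open>n \<ge> 1\<close> by auto
  have "foldr (\<lambda>i y. (if i = (1::nat) then f1 else f2) y) ?w1 x = c"
    using word[OF w1(1)] by simp
  with w1 have "c \<in> multi_iter f1 f2 n x"
    unfolding multi_iter_def by (intro CollectI exI[of _ ?w1]) auto
  moreover have "foldr (\<lambda>i y. (if i = (1::nat) then f1 else f2) y) ?w2 x = (f2 ^^ n) x"
    using word[OF w2(1)] by simp
  with w2 have "(f2 ^^ n) x \<in> multi_iter f1 f2 n x"
    unfolding multi_iter_def by (intro CollectI exI[of _ ?w2]) auto
  ultimately show "{c, (f2 ^^ n) x} \<subseteq> multi_iter f1 f2 n x"
    by simp
qed

theorem theorem3p8:
  fixes X :: "'a::metric_space set" and f1 f2 :: "'a \<Rightarrow> 'a" and c :: 'a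
  assumes "compact X"
    and "continuous_on X f1" and "f1 ` X \<subseteq> X"
    and "continuous_on X f2" and "f2 ` X \<subseteq> X"
    and "c \<in> X" and "\<forall>x\<in>X. f1 x = c" and "f2 c = c"
    and "accessible_map X f2"
  shows "accessible_multi X f1 f2"
  unfolding accessible_multi_def
proof (intro allI impI)
  fix e :: real and U V
  assume "e > 0" and UV: "openin (top_of_set X) U \<and> U \<noteq> {} \<and> openin (top_of_set X) V \<and> V \<noteq> {}"
  then obtain x y n where "x \<in> U" "y \<in> V" "n \<ge> 1"
    and close: "dist ((f2 ^^ n) x) ((f2 ^^ n) y) < e"
    using \<open>accessible_map X f2\<close> unfolding accessible_map_def by blast
  moreover have "x \<in> X" "y \<in> X"
    using UV \<open>x \<in> U\<close> \<open>y \<in> V\<close> openin_imp_subset by blast+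
  ultimately have "hdist (multi_iter f1 f2 n x) (multi_iter f1 f2 n y)
      = hdist {c, (f2 ^^ n) x} {c, (f2 ^^ n) y}"
    using multi_iter_collapse[OF assms(7,8,5,6)] by simp
  also have "\<dots> \<le> dist ((f2 ^^ n) x) ((f2 ^^ n) y)"
    by (rule hdist_insert_insert_le)
  finally have "hdist (multi_iter f1 f2 n x) (multi_iter f1 f2 n y) < e"
    using close by simp
  with \<open>x \<in> U\<close> \<open>y \<in> V\<close> \<open>n \<ge> 1\<close>
  show "\<exists>x\<in>U. \<exists>y\<in>V. \<exists>n\<ge>1. hdist (multi_iter f1 f2 n x) (multi_iter f1 f2 n y) < e"
    by blast
qed

end
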